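(* Let $g:(0,\infty)\times[0,\infty)\to\mathbb{R}$ be non-decreasing in the second variable, and assume that for some $t_0$, $S=\sup_{t>t_0,\,h,k>0}|g(t,h+k)-g(t+h,k)-g(t,h)|<\infty$. Then: (i) the quantities $\limsup_{t\to\infty}\frac{g(t,h)}{h}$ and $\liminf_{t\to\infty}\frac{g(t,h)}{h}$ have limits as $h\to\infty$; (ii) $\displaystyle\lim_{t\to\infty}\limsup_{h\to\infty}\frac{g(t,h)}{h}\le\lim_{h\to\infty}\limsup_{t\to\infty}\frac{g(t,h)}{h}$ and $\displaystyle\lim_{t\to\infty}\liminf_{h\to\infty}\frac{g(t,h)}{h}\ge\lim_{h\to\infty}\liminf_{t\to\infty}\frac{g(t,h)}{h}$; (iii) $\lim_{h\to\infty}\limsup_{t\to\infty}\frac{g(t,h)}{h}$ is infinite if and only if $\limsup_{t\to\infty}g(t,h)$ is infinite for one (equivalently, for every) $h>0$. *)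

theory Defs
  imports "HOL-Analysis.Analysis"
begin

end

(* Let G(h) and H(h) be the limsup and liminf of g(t, h) as t \<rightarrow> \<infinity>. The defect bound makes
   G + S subadditive and H - S superadditive, so Fekete's argument gives
   G(h)/h \<rightarrow> inf (G(h) + S)/h and H(h)/h \<rightarrow> sup (H(h) - S)/h. The argument can be made
   uniform in t: iterating the cocycle inequality along t, t + h0, t + 2 h0, ... shows that
   g(s, h0) \<le> b for all s \<ge> t forces g(t, h) \<le> (h/h0 + 1)(b + S) for all h > 0, and dually
   for lower bounds. These uniform bounds also control the limsup and liminf of g(t, h)/h as
   h \<rightarrow> \<infinity> at fixed t, which is how (ii) arises; those quantities do not depend on t > t0,
   because g(t + d, h) = g(t, d + h) - g(t, d) up to an error S. Finiteness of G at a single h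
   propagates to all h by the same upper bound, which gives (iii). *)

theory Submission
  imports Defs
begin

lemma Limsup_le_lim:
  fixes f u :: "'a \<Rightarrow> 'b :: {complete_linorder, linorder_topology}"
  assumes "\<not> trivial_limit F" "\<forall>\<^sub>F x in F. f x \<le> u x" "(u \<longlongrightarrow> l) F"
  shows "Limsup F f \<le> l"
  using Limsup_mono[OF assms(2)] lim_imp_Limsup[OF _ assms(3)] assms(1) by simp

lemma lim_le_Liminf:
  fixes f u :: "'a \<Rightarrow> 'b :: {complete_linorder, linorder_topology}"
  assumes "\<not> trivial_limit F" "\<forall>\<^sub>F x in F. u x \<le> f x" "(u \<longlongrightarrow> l) F"
  shows "l \<le> Liminf F f"
  using Liminf_mono[OF assms(2)] lim_imp_Liminf[OF _ assms(3)] assms(1) by simp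

lemma ereal_dense_le:
  fixes y z :: ereal
  assumes "\<And>r. ereal r < y \<Longrightarrow> ereal r \<le> z"
  shows "y \<le> z"
proof (rule dense_le)
  fix x assume "x < y"
  then show "x \<le> z" using assms by (cases x) auto
qed

lemma ereal_dense_ge:
  fixes y z :: ereal
  assumes "\<And>r. z < ereal r \<Longrightarrow> y \<le> ereal r"
  shows "y \<le> z"
proof (rule dense_ge)
  fix x assume "z < x"
  then show "y \<le> x" using assms by (cases x) auto
qed

lemma eventually_at_top_add_const:
  fixes d :: real
  assumes "\<forall>\<^sub>F h in at_top. P h"
  shows "\<forall>\<^sub>F h in at_top. P (h + d)"
proof -
  from assms obtain N where "\<forall>h\<ge>N. P h" by (auto simp: eventually_at_top_linorder)
  then show ?thesis unfolding eventually_at_top_linorder by (intro exI[of _ "N - d"]) auto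
qed

lemma tendsto_const_over_at_top: "((\<lambda>h::real. c / h) \<longlongrightarrow> 0) at_top"
  by (intro tendsto_divide_0[OF tendsto_const] filterlim_at_top_imp_at_infinity filterlim_ident)

lemma tendsto_add_const_over_at_top: "((\<lambda>h::real. a + c / h) \<longlongrightarrow> a) at_top"
  using tendsto_add[OF tendsto_const tendsto_const_over_at_top, of a c] by simp

lemma tendsto_diff_const_over_at_top: "((\<lambda>h::real. a - c / h) \<longlongrightarrow> a) at_top"
  using tendsto_diff[OF tendsto_const tendsto_const_over_at_top, of a c] by simp

lemma Limsup_ratio_le_shift:
  fixes u v :: "real \<Rightarrow> real"
  assumes "\<forall>\<^sub>F h in at_top. u h \<le> v (h + d) + c"
  shows "Limsup at_top (\<lambda>h. ereal (u h / h)) \<le> Limsup at_top (\<lambda>h. ereal (v h / h))"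
proof (rule ereal_dense_ge)
  fix r assume "Limsup at_top (\<lambda>h. ereal (v h / h)) < ereal r"
  then have "\<forall>\<^sub>F h in at_top. v h / h < r \<and> 0 < h"
    using Limsup_lessD eventually_gt_at_top[of 0] by (fastforce elim: eventually_elim2)
  then have "\<forall>\<^sub>F h in at_top. v (h + d) / (h + d) < r \<and> 0 < h + d"
    by (rule eventually_at_top_add_const)
  then have "\<forall>\<^sub>F h in at_top. v (h + d) < r * (h + d)"
    by (rule eventually_mono) (auto simp: field_simps)
  with assms have bound: "\<forall>\<^sub>F h in at_top. ereal (u h / h) \<le> ereal (r + (r * d + c) / h)"
    using eventually_gt_at_top[of 0]
    by eventually_elim (simp add: field_simps)
  have "((\<lambda>h. ereal (r + (r * d + c) / h)) \<longlongrightarrow> ereal r) at_top"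
    by (intro tendsto_ereal tendsto_add_const_over_at_top)
  then show "Limsup at_top (\<lambda>h. ereal (u h / h)) \<le> ereal r"
    by (rule Limsup_le_lim[OF trivial_limit_at_top_linorder bound])
qed

lemma Liminf_ratio_ge_shift:
  fixes u v :: "real \<Rightarrow> real"
  assumes "\<forall>\<^sub>F h in at_top. v (h + d) - c \<le> u h"
  shows "Liminf at_top (\<lambda>h. ereal (v h / h)) \<le> Liminf at_top (\<lambda>h. ereal (u h / h))"
proof -
  have "Limsup at_top (\<lambda>h. ereal (- u h / h)) \<le> Limsup at_top (\<lambda>h. ereal (- v h / h))"
    using assms by (intro Limsup_ratio_le_shift[where d = d and c = c]) (auto elim: eventually_mono)
  then show ?thesis
    using ereal_Limsup_uminus[of at_top "\<lambda>h. ereal (u h / h)"]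
      ereal_Limsup_uminus[of at_top "\<lambda>h. ereal (v h / h)"] by simp
qed

lemma tendsto_INF_of_Limsup_le:
  fixes a :: "real \<Rightarrow> ereal" and \<delta> :: "real \<Rightarrow> real"
  assumes \<delta>: "(\<delta> \<longlongrightarrow> 0) at_top"
    and le: "\<And>h. 0 < h \<Longrightarrow> Limsup at_top a \<le> a h + ereal (\<delta> h)"
  shows "(a \<longlongrightarrow> (INF h\<in>{0<..}. a h + ereal (\<delta> h))) at_top"
proof -
  define X where "X = (INF h\<in>{0<..}. a h + ereal (\<delta> h))"
  have "Limsup at_top a \<le> X"
    unfolding X_def by (rule INF_greatest) (simp add: le)
  moreover have "X \<le> Liminf at_top a"
  proof (rule ereal_le_epsilon2)
    fix e :: real assume "0 < e"
    have "\<forall>\<^sub>F h in at_top. X \<le> a h + ereal e"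
      using eventually_gt_at_top[of 0] order_tendstoD(2)[OF \<delta> \<open>0 < e\<close>]
    proof eventually_elim
      case (elim h)
      then have "X \<le> a h + ereal (\<delta> h)" unfolding X_def by (intro INF_lower) auto
      also have "\<dots> \<le> a h + ereal e" using elim by (intro add_left_mono) simp
      finally show ?case .
    qed
    then have "X \<le> Liminf at_top (\<lambda>h. a h + ereal e)" by (rule Liminf_bounded)
    then show "X \<le> Liminf at_top a + ereal e" by (simp add: Liminf_add_ereal_right)
  qed
  moreover have "Liminf at_top a \<le> Limsup at_top a" by (simp add: Liminf_le_Limsup)
  ultimately show ?thesis
    unfolding X_def[symmetric] by (intro Liminf_eq_Limsup) auto
qed

lemma tendsto_SUP_of_Liminf_ge:
  fixes a :: "real \<Rightarrow> ereal" and \<delta> :: "real \<Rightarrow> real"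
  assumes \<delta>: "(\<delta> \<longlongrightarrow> 0) at_top"
    and ge: "\<And>h. 0 < h \<Longrightarrow> a h - ereal (\<delta> h) \<le> Liminf at_top a"
  shows "(a \<longlongrightarrow> (SUP h\<in>{0<..}. a h - ereal (\<delta> h))) at_top"
proof -
  have "((\<lambda>h. - a h) \<longlongrightarrow> (INF h\<in>{0<..}. - a h + ereal (\<delta> h))) at_top"
  proof (rule tendsto_INF_of_Limsup_le[OF \<delta>])
    fix h :: real assume "0 < h"
    have "- Liminf at_top a \<le> - (a h - ereal (\<delta> h))" using ge[OF \<open>0 < h\<close>] by simp
    also have "\<dots> = - a h + ereal (\<delta> h)" by (cases "a h") auto
    finally show "Limsup at_top (\<lambda>h. - a h) \<le> - a h + ereal (\<delta> h)"
      by (simp add: ereal_Limsup_uminus)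
  qed
  then have "((\<lambda>h. - (- a h)) \<longlongrightarrow> - (INF h\<in>{0<..}. - a h + ereal (\<delta> h))) at_top"
    by (rule tendsto_uminus_ereal)
  moreover have "- (- x + ereal y) = x - ereal y" for x :: ereal and y by (cases x) auto
  then have "- (INF h\<in>{0<..}. - a h + ereal (\<delta> h)) = (SUP h\<in>{0<..}. a h - ereal (\<delta> h))"
    by (simp add: ereal_SUP_uminus_eq[symmetric])
  ultimately show ?thesis by simp
qed

lemma mult_le_abs_of_le_one:
  fixes x y :: "'a :: linordered_idom"
  assumes "0 \<le> x" "x \<le> 1"
  shows "x * y \<le> \<bar>y\<bar>"
  using mult_left_mono[OF abs_ge_self assms(1)] mult_left_le_one_le[OF abs_ge_zero assms]
  by (rule order.trans)

locale quasi_cocycle =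
  fixes g :: "real \<Rightarrow> real \<Rightarrow> real" and T S :: real
  assumes mono: "\<And>t h k. T < t \<Longrightarrow> 0 \<le> h \<Longrightarrow> h \<le> k \<Longrightarrow> g t h \<le> g t k"
    and cocycle: "\<And>t h k. T < t \<Longrightarrow> 0 < h \<Longrightarrow> 0 < k \<Longrightarrow>
      \<bar>g t (h + k) - g (t + h) k - g t h\<bar> \<le> S"
begin

lemma cocycle_le: "T < t \<Longrightarrow> 0 < h \<Longrightarrow> 0 < k \<Longrightarrow> g t (h + k) \<le> g (t + h) k + g t h + S"
  using cocycle[of t h k] by (simp add: abs_le_iff)

lemma cocycle_ge: "T < t \<Longrightarrow> 0 < h \<Longrightarrow> 0 < k \<Longrightarrow> g (t + h) k + g t h - S \<le> g t (h + k)"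
  using cocycle[of t h k] by (simp add: abs_le_iff)

lemma S_nonneg: "0 \<le> S"
  using cocycle[of "T + 1" 1 1] abs_ge_zero order.trans by fastforce

lemma minus_S_le:
  assumes "T < s" "0 < k"
  shows "- S \<le> g s k"
proof -
  define t where "t = (T + s) / 2"
  have t: "T < t" "0 < s - t" using assms by (auto simp: t_def)
  have "g t (s - t) \<le> g t ((s - t) + k)" using t assms by (intro mono) auto
  also have "\<dots> \<le> g s k + g t (s - t) + S" using cocycle_le[OF t assms(2)] by simp
  finally show ?thesis by simp
qed

lemma iterate_le:
  assumes "T < t" "0 < h0" "\<And>s. t \<le> s \<Longrightarrow> g s h0 \<le> b" "1 \<le> n"
  shows "g t (real n * h0) \<le> real n * (b + S) - S"
  using assms(4)
proof (induction n rule: dec_induct)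
  case base
  then show ?case using assms(3)[of t] by simp
next
  case (step n)
  have "g t (real (Suc n) * h0) = g t (real n * h0 + h0)" by (simp add: algebra_simps)
  also have "\<dots> \<le> g (t + real n * h0) h0 + g t (real n * h0) + S"
    using assms step by (intro cocycle_le) auto
  also have "\<dots> \<le> b + (real n * (b + S) - S) + S"
    using assms(2) assms(3)[of "t + real n * h0"] step by simp
  finally show ?case by (simp add: algebra_simps)
qed

lemma iterate_ge:
  assumes "T < t" "0 < h0" "\<And>s. t \<le> s \<Longrightarrow> b \<le> g s h0" "1 \<le> n"
  shows "real n * (b - S) + S \<le> g t (real n * h0)"
  using assms(4)
proof (induction n rule: dec_induct)
  case base
  then show ?case using assms(3)[of t] by simp
next
  case (step n)
  have "b + (real n * (b - S) + S) - S \<le> g (t + real n * h0) h0 + g t (real n * h0) - S"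
    using assms(2) assms(3)[of "t + real n * h0"] step by simp
  also have "\<dots> \<le> g t (real n * h0 + h0)"
    using assms step by (intro cocycle_ge) auto
  also have "\<dots> = g t (real (Suc n) * h0)" by (simp add: algebra_simps)
  finally show ?case by (simp add: algebra_simps)
qed

lemma eventually_ratio_le:
  assumes h0: "0 < h0" and b: "\<forall>\<^sub>F t in at_top. g t h0 \<le> b"
  shows "\<forall>\<^sub>F t in at_top. \<forall>h>0. g t h / h \<le> (b + S) / h0 + (b + S) / h"
proof -
  from b obtain N where N: "\<And>s. N \<le> s \<Longrightarrow> g s h0 \<le> b"
    by (auto simp: eventually_at_top_linorder)
  have "\<forall>h>0. g t h / h \<le> (b + S) / h0 + (b + S) / h" if t: "max N (T + 1) \<le> t" for t
  proof (intro allI impI)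
    fix h :: real assume h: "0 < h"
    have tT: "T < t" using t by simp
    have bS: "0 \<le> b + S" using N[of t] minus_S_le[OF tT h0] t by simp
    define n where "n = nat \<lceil>h / h0\<rceil>"
    have "0 < h / h0" using h h0 by simp
    then have n: "h / h0 \<le> real n" "real n < h / h0 + 1" "1 \<le> n"
      unfolding n_def by linarith+
    have "g t h \<le> g t (real n * h0)"
      using tT h h0 n(1) by (intro mono) (auto simp: field_simps)
    also have "\<dots> \<le> real n * (b + S) - S"
      using tT h0 N t n(3) by (intro iterate_le) auto
    also have "\<dots> \<le> (h / h0 + 1) * (b + S)"
      using mult_right_mono[OF less_imp_le[OF n(2)] bS] S_nonneg by simp
    finally show "g t h / h \<le> (b + S) / h0 + (b + S) / h"
      using h h0 by (simp add: field_simps)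
  qed
  then show ?thesis unfolding eventually_at_top_linorder by blast
qed

lemma eventually_ratio_ge:
  assumes h0: "0 < h0" and b: "\<forall>\<^sub>F t in at_top. b \<le> g t h0"
  shows "\<forall>\<^sub>F t in at_top. \<forall>h>0. (b - S) / h0 - (\<bar>b - S\<bar> + S) / h \<le> g t h / h"
proof -
  from b obtain N where N: "\<And>s. N \<le> s \<Longrightarrow> b \<le> g s h0"
    by (auto simp: eventually_at_top_linorder)
  have "\<forall>h>0. (b - S) / h0 - (\<bar>b - S\<bar> + S) / h \<le> g t h / h" if t: "max N (T + 1) \<le> t" for t
  proof (intro allI impI)
    fix h :: real assume h: "0 < h"
    have tT: "T < t" using t by simp
    have bound: "h / h0 * (b - S) - \<bar>b - S\<bar> - S \<le> g t h"
    proof (cases "h < h0")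
      case True
      then have "h / h0 * (b - S) \<le> \<bar>b - S\<bar>"
        using h h0 by (intro mult_le_abs_of_le_one) auto
      then show ?thesis using minus_S_le[OF tT h] by linarith
    next
      case False
      define n where "n = nat \<lfloor>h / h0\<rfloor>"
      have "1 \<le> h / h0" using False h0 by simp
      then have n: "real n \<le> h / h0" "h / h0 - 1 < real n" "1 \<le> n"
        unfolding n_def by linarith+
      have "(h / h0 - real n) * (b - S) \<le> \<bar>b - S\<bar>"
        using n(1,2) by (intro mult_le_abs_of_le_one) auto
      then have "h / h0 * (b - S) - \<bar>b - S\<bar> \<le> real n * (b - S)"
        by (simp add: left_diff_distrib)
      moreover have "real n * (b - S) + S \<le> g t (real n * h0)"
        using tT h0 N t n(3) by (intro iterate_ge) auto
      moreover have "g t (real n * h0) \<le> g t h"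
        using tT h0 n(1) by (intro mono) (auto simp: field_simps)
      ultimately show ?thesis using S_nonneg by linarith
    qed
    have "(b - S) / h0 - (\<bar>b - S\<bar> + S) / h = (h / h0 * (b - S) - \<bar>b - S\<bar> - S) / h"
      using h h0 by (simp add: field_simps)
    then show "(b - S) / h0 - (\<bar>b - S\<bar> + S) / h \<le> g t h / h"
      using divide_right_mono[OF bound, of h] h by simp
  qed
  then show ?thesis unfolding eventually_at_top_linorder by blast
qed

definition limsup_h :: "real \<Rightarrow> ereal" where
  "limsup_h t = Limsup at_top (\<lambda>h. ereal (g t h / h))"

definition liminf_h :: "real \<Rightarrow> ereal" where
  "liminf_h t = Liminf at_top (\<lambda>h. ereal (g t h / h))"

definition limsup_t :: "real \<Rightarrow> ereal" where
  "limsup_t h = Limsup at_top (\<lambda>t. ereal (g t h / h))"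

definition liminf_t :: "real \<Rightarrow> ereal" where
  "liminf_t h = Liminf at_top (\<lambda>t. ereal (g t h / h))"

lemma limsup_h_shift:
  assumes "T < t" "0 < d"
  shows "limsup_h (t + d) = limsup_h t"
proof (rule antisym)
  have "g (t + d) h \<le> g t (h + d) + (S - g t d)" if "0 < h" for h
    using cocycle_ge[OF assms that] by (simp add: add.commute)
  then show "limsup_h (t + d) \<le> limsup_h t"
    unfolding limsup_h_def
    by (intro Limsup_ratio_le_shift[where d = d and c = "S - g t d"]
        eventually_mono[OF eventually_gt_at_top[of 0]])
next
  have "g t h \<le> g (t + d) (h + - d) + (g t d + S)" if "d < h" for h
    using cocycle_le[OF assms, of "h - d"] that by simp
  then show "limsup_h t \<le> limsup_h (t + d)"
    unfolding limsup_h_def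
    by (intro Limsup_ratio_le_shift[where d = "- d" and c = "g t d + S"]
        eventually_mono[OF eventually_gt_at_top[of d]])
qed

lemma liminf_h_shift:
  assumes "T < t" "0 < d"
  shows "liminf_h (t + d) = liminf_h t"
proof (rule antisym)
  have "g (t + d) (h + - d) - (S - g t d) \<le> g t h" if "d < h" for h
    using cocycle_ge[OF assms, of "h - d"] that by simp
  then show "liminf_h (t + d) \<le> liminf_h t"
    unfolding liminf_h_def
    by (intro Liminf_ratio_ge_shift[where d = "- d" and c = "S - g t d"]
        eventually_mono[OF eventually_gt_at_top[of d]])
next
  have "g t (h + d) - (g t d + S) \<le> g (t + d) h" if "0 < h" for h
    using cocycle_le[OF assms that] by (simp add: add.commute)
  then show "liminf_h t \<le> liminf_h (t + d)"
    unfolding liminf_h_def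
    by (intro Liminf_ratio_ge_shift[where d = d and c = "g t d + S"]
        eventually_mono[OF eventually_gt_at_top[of 0]])
qed

lemma limsup_h_eq: "T < t \<Longrightarrow> T < s \<Longrightarrow> limsup_h t = limsup_h s"
  using limsup_h_shift[of t "s - t"] limsup_h_shift[of s "t - s"]
  by (cases t s rule: linorder_cases) auto

lemma liminf_h_eq: "T < t \<Longrightarrow> T < s \<Longrightarrow> liminf_h t = liminf_h s"
  using liminf_h_shift[of t "s - t"] liminf_h_shift[of s "t - s"]
  by (cases t s rule: linorder_cases) auto

lemma limsup_h_tendsto: "(limsup_h \<longlongrightarrow> limsup_h (T + 1)) at_top"
  by (intro tendsto_eventually eventually_mono[OF eventually_gt_at_top[of T]] limsup_h_eq) simp_all

lemma liminf_h_tendsto: "(liminf_h \<longlongrightarrow> liminf_h (T + 1)) at_top"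
  by (intro tendsto_eventually eventually_mono[OF eventually_gt_at_top[of T]] liminf_h_eq) simp_all

lemma eventually_ratio_le_of_limsup_t:
  assumes h0: "0 < h0" and r: "limsup_t h0 + ereal (S / h0) < ereal r"
  shows "\<forall>\<^sub>F t in at_top. \<forall>h>0. g t h / h \<le> r + r * h0 / h"
proof -
  have "limsup_t h0 < ereal (r - S / h0)" using r by (cases "limsup_t h0") auto
  then have "\<forall>\<^sub>F t in at_top. g t h0 / h0 < r - S / h0"
    unfolding limsup_t_def by (auto dest: Limsup_lessD)
  then have "\<forall>\<^sub>F t in at_top. g t h0 \<le> r * h0 - S"
    by (rule eventually_mono) (use h0 in \<open>simp add: field_simps\<close>)
  from eventually_ratio_le[OF h0 this] show ?thesis
    using h0 by simp
qed

lemma eventually_ratio_ge_of_liminf_t: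
  assumes h0: "0 < h0" and r: "ereal r < liminf_t h0 - ereal (S / h0)"
  shows "\<forall>\<^sub>F t in at_top. \<forall>h>0. r - (\<bar>r * h0\<bar> + S) / h \<le> g t h / h"
proof -
  have "ereal (r + S / h0) < liminf_t h0" using r by (cases "liminf_t h0") auto
  then have "\<forall>\<^sub>F t in at_top. r + S / h0 < g t h0 / h0"
    unfolding liminf_t_def by (auto dest: less_LiminfD)
  then have "\<forall>\<^sub>F t in at_top. r * h0 + S \<le> g t h0"
  proof (rule eventually_mono)
    fix t assume "r + S / h0 < g t h0 / h0"
    then have "(r + S / h0) * h0 < g t h0" using h0 by (simp add: pos_less_divide_eq)
    then show "r * h0 + S \<le> g t h0" using h0 by (simp add: distrib_right)
  qed
  from eventually_ratio_ge[OF h0 this] show ?thesis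
    using h0 by simp
qed

lemma limsup_t_le_of_limsup_t_less:
  assumes "0 < h0" "0 < h" "limsup_t h0 + ereal (S / h0) < ereal r"
  shows "limsup_t h \<le> ereal (r + r * h0 / h)"
  unfolding limsup_t_def
  using eventually_ratio_le_of_limsup_t[OF assms(1,3)] assms(2)
  by (intro Limsup_bounded) (auto elim: eventually_mono)

lemma liminf_t_ge_of_less_liminf_t:
  assumes "0 < h0" "0 < h" "ereal r < liminf_t h0 - ereal (S / h0)"
  shows "ereal (r - (\<bar>r * h0\<bar> + S) / h) \<le> liminf_t h"
  unfolding liminf_t_def
  using eventually_ratio_ge_of_liminf_t[OF assms(1,3)] assms(2)
  by (intro Liminf_bounded) (auto elim: eventually_mono)

lemma limsup_h_le_limsup_t:
  assumes "T < t" "0 < h0"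
  shows "limsup_h t \<le> limsup_t h0 + ereal (S / h0)"
proof (rule ereal_dense_ge)
  fix r assume "limsup_t h0 + ereal (S / h0) < ereal r"
  from eventually_ratio_le_of_limsup_t[OF assms(2) this] obtain N
    where N: "\<And>s h. N \<le> s \<Longrightarrow> 0 < h \<Longrightarrow> g s h / h \<le> r + r * h0 / h"
    by (auto simp: eventually_at_top_linorder)
  have "limsup_h t = limsup_h (max N t)" using assms(1) by (intro limsup_h_eq) auto
  also have "\<dots> \<le> ereal r"
    unfolding limsup_h_def
    by (rule Limsup_le_lim[OF trivial_limit_at_top_linorder eventually_mono[OF eventually_gt_at_top[of 0]]
          tendsto_ereal[OF tendsto_add_const_over_at_top[of r "r * h0"]]])
      (simp add: N)
  finally show "limsup_h t \<le> ereal r" .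
qed

lemma liminf_t_le_liminf_h:
  assumes "T < t" "0 < h0"
  shows "liminf_t h0 - ereal (S / h0) \<le> liminf_h t"
proof (rule ereal_dense_le)
  fix r assume "ereal r < liminf_t h0 - ereal (S / h0)"
  from eventually_ratio_ge_of_liminf_t[OF assms(2) this] obtain N
    where N: "\<And>s h. N \<le> s \<Longrightarrow> 0 < h \<Longrightarrow> r - (\<bar>r * h0\<bar> + S) / h \<le> g s h / h"
    by (auto simp: eventually_at_top_linorder)
  have "ereal r \<le> liminf_h (max N t)"
    unfolding liminf_h_def
    by (rule lim_le_Liminf[OF trivial_limit_at_top_linorder eventually_mono[OF eventually_gt_at_top[of 0]]
          tendsto_ereal[OF tendsto_diff_const_over_at_top[of r "\<bar>r * h0\<bar> + S"]]])
      (simp add: N)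
  also have "\<dots> = liminf_h t" using assms(1) by (intro liminf_h_eq) auto
  finally show "ereal r \<le> liminf_h t" .
qed

lemma Limsup_limsup_t_le:
  assumes "0 < h0"
  shows "Limsup at_top limsup_t \<le> limsup_t h0 + ereal (S / h0)"
proof (rule ereal_dense_ge)
  fix r assume "limsup_t h0 + ereal (S / h0) < ereal r"
  then show "Limsup at_top limsup_t \<le> ereal r"
    using limsup_t_le_of_limsup_t_less[OF assms]
    by (intro Limsup_le_lim[OF trivial_limit_at_top_linorder eventually_mono[OF eventually_gt_at_top[of 0]]
          tendsto_ereal[OF tendsto_add_const_over_at_top[of r "r * h0"]]])
      simp
qed

lemma liminf_t_le_Liminf_liminf_t:
  assumes "0 < h0"
  shows "liminf_t h0 - ereal (S / h0) \<le> Liminf at_top liminf_t"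
proof (rule ereal_dense_le)
  fix r assume "ereal r < liminf_t h0 - ereal (S / h0)"
  then show "ereal r \<le> Liminf at_top liminf_t"
    using liminf_t_ge_of_less_liminf_t[OF assms]
    by (intro lim_le_Liminf[OF trivial_limit_at_top_linorder eventually_mono[OF eventually_gt_at_top[of 0]]
          tendsto_ereal[OF tendsto_diff_const_over_at_top[of r "\<bar>r * h0\<bar> + S"]]])
      simp
qed

lemma limsup_t_ge:
  assumes "0 < h"
  shows "ereal (- S / h) \<le> limsup_t h"
proof -
  have "- S / h \<le> g t h / h" if "T < t" for t
    using divide_right_mono[OF minus_S_le[OF that assms]] assms by simp
  then show ?thesis
    unfolding limsup_t_def by (intro le_Limsup eventually_mono[OF eventually_gt_at_top[of T]]) auto
qed

lemma abs_Limsup_eq_infinity_iff: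
  assumes "0 < h"
  shows "\<bar>Limsup at_top (\<lambda>t. ereal (g t h))\<bar> = \<infinity> \<longleftrightarrow> limsup_t h = \<infinity>"
proof -
  have "limsup_t h = Limsup at_top (\<lambda>t. ereal (g t h)) * ereal (1 / h)"
    using Limsup_ereal_mult_right[of at_top "1 / h" "\<lambda>t. ereal (g t h)"] assms
    by (simp add: limsup_t_def)
  moreover have "ereal (- S) \<le> Limsup at_top (\<lambda>t. ereal (g t h))"
    by (intro le_Limsup eventually_mono[OF eventually_gt_at_top[of T]]) (auto simp: minus_S_le assms)
  ultimately show ?thesis
    using assms by (cases "Limsup at_top (\<lambda>t. ereal (g t h))") auto
qed

lemma limsup_t_eq_infinity:
  assumes "0 < h0" "0 < h" "limsup_t h0 = \<infinity>"
  shows "limsup_t h = \<infinity>"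
proof (rule ccontr)
  assume "limsup_t h \<noteq> \<infinity>"
  then have "limsup_t h + ereal (S / h) < \<infinity>" by (cases "limsup_t h") auto
  then obtain r where "limsup_t h + ereal (S / h) < ereal r"
    using ereal_dense2 by blast
  from limsup_t_le_of_limsup_t_less[OF assms(2,1) this] assms(3) show False by simp
qed

definition limsup_rate :: ereal where
  "limsup_rate = (INF h\<in>{0<..}. limsup_t h + ereal (S / h))"

definition liminf_rate :: ereal where
  "liminf_rate = (SUP h\<in>{0<..}. liminf_t h - ereal (S / h))"

lemma limsup_t_tendsto: "(limsup_t \<longlongrightarrow> limsup_rate) at_top"
  unfolding limsup_rate_def
  by (rule tendsto_INF_of_Limsup_le[OF tendsto_const_over_at_top Limsup_limsup_t_le])

lemma liminf_t_tendsto: "(liminf_t \<longlongrightarrow> liminf_rate) at_top"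
  unfolding liminf_rate_def
  by (rule tendsto_SUP_of_Liminf_ge[OF tendsto_const_over_at_top liminf_t_le_Liminf_liminf_t])

lemma limsup_h_le_limsup_rate: "T < t \<Longrightarrow> limsup_h t \<le> limsup_rate"
  unfolding limsup_rate_def by (rule INF_greatest) (simp add: limsup_h_le_limsup_t)

lemma liminf_rate_le_liminf_h: "T < t \<Longrightarrow> liminf_rate \<le> liminf_h t"
  unfolding liminf_rate_def by (rule SUP_least) (simp add: liminf_t_le_liminf_h)

lemma limsup_rate_nonneg: "0 \<le> limsup_rate"
  unfolding limsup_rate_def
proof (rule INF_greatest)
  fix h :: real assume "h \<in> {0<..}"
  then show "0 \<le> limsup_t h + ereal (S / h)"
    using limsup_t_ge[of h] by (cases "limsup_t h") auto
qed

lemma limsup_rate_eq_infinity_iff: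
  assumes "0 < h"
  shows "limsup_rate = \<infinity> \<longleftrightarrow> limsup_t h = \<infinity>"
proof
  assume "limsup_rate = \<infinity>"
  then have "limsup_t h + ereal (S / h) = \<infinity>"
    using INF_lower[of h "{0<..}" "\<lambda>h. limsup_t h + ereal (S / h)"] assms
    by (simp add: limsup_rate_def)
  then show "limsup_t h = \<infinity>" by (cases "limsup_t h") auto
next
  assume "limsup_t h = \<infinity>"
  then show "limsup_rate = \<infinity>"
    unfolding limsup_rate_def using limsup_t_eq_infinity[OF assms] by simp
qed

lemma abs_limsup_rate_eq_infinity_iff:
  assumes "0 < h"
  shows "\<bar>limsup_rate\<bar> = \<infinity> \<longleftrightarrow> \<bar>Limsup at_top (\<lambda>t. ereal (g t h))\<bar> = \<infinity>"
  using limsup_rate_nonneg limsup_rate_eq_infinity_iff[OF assms]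
    abs_Limsup_eq_infinity_iff[OF assms]
  by auto

end

theorem proposition5p2:
  fixes g :: "real \<Rightarrow> real \<Rightarrow> real"
  assumes mono: "\<And>t h k. 0 < t \<Longrightarrow> 0 \<le> h \<Longrightarrow> h \<le> k \<Longrightarrow> g t h \<le> g t k"
    and bdd: "\<exists>t0. \<exists>S::real. \<forall>t h k. t > t0 \<and> t > 0 \<and> h > 0 \<and> k > 0 \<longrightarrow>
               \<bar>g t (h + k) - g (t + h) k - g t h\<bar> \<le> S"
  shows
    \<comment> \<open>(i)\<close>
    "(\<exists>L. ((\<lambda>h. Limsup at_top (\<lambda>t. ereal (g t h / h))) \<longlongrightarrow> L) at_top)
     \<and> (\<exists>L. ((\<lambda>h. Liminf at_top (\<lambda>t. ereal (g t h / h))) \<longlongrightarrow> L) at_top)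
     \<comment> \<open>(ii)\<close>
     \<and> (\<exists>L1 L2. ((\<lambda>t. Limsup at_top (\<lambda>h. ereal (g t h / h))) \<longlongrightarrow> L1) at_top
             \<and> ((\<lambda>h. Limsup at_top (\<lambda>t. ereal (g t h / h))) \<longlongrightarrow> L2) at_top
             \<and> L1 \<le> L2)
     \<and> (\<exists>L1 L2. ((\<lambda>t. Liminf at_top (\<lambda>h. ereal (g t h / h))) \<longlongrightarrow> L1) at_top
             \<and> ((\<lambda>h. Liminf at_top (\<lambda>t. ereal (g t h / h))) \<longlongrightarrow> L2) at_top
             \<and> L1 \<ge> L2)
     \<comment> \<open>(iii)\<close>
     \<and> (\<exists>L. ((\<lambda>h. Limsup at_top (\<lambda>t. ereal (g t h / h))) \<longlongrightarrow> L) at_top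
          \<and> (\<bar>L\<bar> = \<infinity> \<longleftrightarrow> (\<exists>h>0. \<bar>Limsup at_top (\<lambda>t. ereal (g t h))\<bar> = \<infinity>))
          \<and> (\<bar>L\<bar> = \<infinity> \<longleftrightarrow> (\<forall>h>0. \<bar>Limsup at_top (\<lambda>t. ereal (g t h))\<bar> = \<infinity>)))"
proof -
  from bdd obtain t0 S where "\<forall>t h k. t > t0 \<and> t > 0 \<and> h > 0 \<and> k > 0 \<longrightarrow>
      \<bar>g t (h + k) - g (t + h) k - g t h\<bar> \<le> S"
    by blast
  with mono interpret quasi_cocycle g "max t0 0" S
    by unfold_locales auto
  have T: "max t0 0 < max t0 0 + 1" by simp
  have infinite_iff_ex: "\<bar>limsup_rate\<bar> = \<infinity> \<longleftrightarrow> (\<exists>h>0. \<bar>Limsup at_top (\<lambda>t. ereal (g t h))\<bar> = \<infinity>)"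
   and infinite_iff_all: "\<bar>limsup_rate\<bar> = \<infinity> \<longleftrightarrow> (\<forall>h>0. \<bar>Limsup at_top (\<lambda>t. ereal (g t h))\<bar> = \<infinity>)"
    by (metis abs_limsup_rate_eq_infinity_iff zero_less_one)+
  show ?thesis
    unfolding limsup_t_def[symmetric] liminf_t_def[symmetric] limsup_h_def[symmetric] liminf_h_def[symmetric]
    by (intro conjI exI)
      (rule limsup_t_tendsto liminf_t_tendsto limsup_h_tendsto liminf_h_tendsto
        limsup_h_le_limsup_rate[OF T] liminf_rate_le_liminf_h[OF T] infinite_iff_ex infinite_iff_all)+
qed

end
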